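(* There is $c>0$ independent of $h$ such that for all $u\in C^0(\bar I)$ and $v\in C^0(\bar I)^d$ with $|v(z)|=1$ for all $z\in\mathcal N_2(\mathcal T_h)$, $$\|\mathcal I_{h,2}(uv)\|_{L^1(I)^d}\le c\|\mathcal I_{h,2}u\|_{L^1(I)}.$$
   Context: Mesh notation: $I=(a,b)\subset\mathbb R$, $a=x_0<x_1<\dots<x_M=b$, $I_i=[x_{i-1},x_i]$, $h_i=x_i-x_{i-1}$, $h=\max_i h_i$, $\mathcal T_h=\{I_1,\dots,I_M\}$. Let $m_i=(x_{i-1}+x_i)/2$, $\mathcal N_1(\mathcal T_h)=\{x_0,\dots,x_M\}$, $\mathcal N_2(\mathcal T_h)=\mathcal N_1(\mathcal T_h)\cup\{m_1,\dots,m_M\}$. $\mathcal I_{h,2}$ is the continuous piecewise quadratic nodal interpolant defined by $\mathcal I_{h,2}v(z)=v(z)$ for $z\in\mathcal N_2(\mathcal T_h)$ (componentwise for vector-valued functions). *)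

theory Defs
  imports "HOL-Analysis.Analysis"
begin

definition is_mesh :: "real \<Rightarrow> real \<Rightarrow> nat \<Rightarrow> (nat \<Rightarrow> real) \<Rightarrow> bool" where
  "is_mesh a b M x \<longleftrightarrow> 1 \<le> M \<and> x 0 = a \<and> x M = b \<and> (\<forall>i<M. x i < x (Suc i))"

definition midpt :: "(nat \<Rightarrow> real) \<Rightarrow> nat \<Rightarrow> real" where
  "midpt x i = (x (i - 1) + x i) / 2"

definition nodes2 :: "nat \<Rightarrow> (nat \<Rightarrow> real) \<Rightarrow> real set" where
  "nodes2 M x = {x i | i. i \<le> M} \<union> {midpt x i | i. 1 \<le> i \<and> i \<le> M}"

definition quad_lagr :: "real \<Rightarrow> real \<Rightarrow> real \<Rightarrow> 'a::real_vector \<Rightarrow> 'a \<Rightarrow> 'a \<Rightarrow> real \<Rightarrow> 'a" where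
  "quad_lagr p m q fp fm fq t =
     (((t - m) * (t - q)) / ((p - m) * (p - q))) *\<^sub>R fp
   + (((t - p) * (t - q)) / ((m - p) * (m - q))) *\<^sub>R fm
   + (((t - p) * (t - m)) / ((q - p) * (q - m))) *\<^sub>R fq"

text \<open>Continuous piecewise quadratic nodal interpolant I_{h,2} (componentwise for
  vector-valued f, via scaleR); defined as 0 outside [x 0, x M].  On an element the
  quadratic of the element is used (at interior vertices both adjacent quadratics agree).\<close>
definition interp2 :: "nat \<Rightarrow> (nat \<Rightarrow> real) \<Rightarrow> (real \<Rightarrow> 'a::real_vector) \<Rightarrow> real \<Rightarrow> 'a" where
  "interp2 M x f t =
    (if \<exists>i. 1 \<le> i \<and> i \<le> M \<and> x (i - 1) \<le> t \<and> t \<le> x i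
     then (let i = (LEAST i. 1 \<le> i \<and> i \<le> M \<and> x (i - 1) \<le> t \<and> t \<le> x i)
           in quad_lagr (x (i - 1)) (midpt x i) (x i) (f (x (i - 1))) (f (midpt x i)) (f (x i)) t)
     else 0)"

end

theory Submission
  imports Defs
begin

text \<open>On an element with midpoint m and half-width d, the three Lagrange basis functions of
  the nodes m - d, m, m + d are bounded by 1 in absolute value, so the interpolant of u v has
  norm at most the sum of the nodal values of |u|, since |v| = 1 at the nodes. Conversely,
  testing the scalar quadratic interpolant of u against the weights 1, (t - m)/d and
  ((t - m)/d)^2 bounds its coefficients, hence its nodal values, by its L^1 norm
  on the element, with constants independent of d. Summing over the elements gives c = 54.\<close>

lemma quad_lagr_centered:
  fixes fp fm fq :: real
  assumes "d \<noteq> 0"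
  shows "quad_lagr (m - d) m (m + d) fp fm fq t
    = fm + (fq - fp) / (2*d) * (t - m) + (fp + fq - 2*fm) / (2*d^2) * (t - m)^2"
  unfolding quad_lagr_def using assms by (simp add: field_simps power2_eq_square)

lemma continuous_on_quad_lagr:
  fixes fp fm fq :: "'a::real_normed_vector"
  shows "continuous_on S (quad_lagr p m q fp fm fq)"
  unfolding quad_lagr_def divide_inverse by (intro continuous_intros)

lemma quad_lagr_at_left:
  assumes "p \<noteq> q"
  shows "quad_lagr p ((p + q)/2) q fp fm fq p = fp"
proof -
  have "(p - (p + q)/2) * (p - q) = (p - q)^2 / 2" by (simp add: field_simps power2_eq_square)
  then have "(p - (p + q)/2) * (p - q) \<noteq> 0" using assms by simp
  then show ?thesis unfolding quad_lagr_def by simp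
qed

lemma quad_lagr_at_right:
  assumes "p \<noteq> q"
  shows "quad_lagr p ((p + q)/2) q fp fm fq q = fq"
proof -
  have "(q - p) * (q - (p + q)/2) = (p - q)^2 / 2" by (simp add: field_simps power2_eq_square)
  then have "(q - p) * (q - (p + q)/2) \<noteq> 0" using assms by simp
  then show ?thesis unfolding quad_lagr_def by simp
qed

lemma lagrange_basis_abs_le_1:
  fixes d s :: real
  assumes "d > 0" "\<bar>s\<bar> \<le> d"
  shows "\<bar>s * (s - d) / (2*d^2)\<bar> \<le> 1" "\<bar>(s + d) * (s - d) / d^2\<bar> \<le> 1"
    "\<bar>(s + d) * s / (2*d^2)\<bar> \<le> 1"
proof -
  have s: "-d \<le> s" "s \<le> d" using assms(2) by auto
  have "0 \<le> (2*d - s) * (s + d)" "0 \<le> (d - s) * (s + d)" "0 \<le> (2*d + s) * (d - s)"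
    using s by simp_all
  moreover have "0 \<le> (s - d/2)^2" "0 \<le> s^2" "0 \<le> (s + d/2)^2" by simp_all
  ultimately show "\<bar>s * (s - d) / (2*d^2)\<bar> \<le> 1" "\<bar>(s + d) * (s - d) / d^2\<bar> \<le> 1"
    "\<bar>(s + d) * s / (2*d^2)\<bar> \<le> 1"
    using assms(1) by (auto simp: abs_le_iff field_simps power2_eq_square)
qed

lemma norm_quad_lagr_le:
  fixes fp fm fq :: "'a::real_normed_vector"
  assumes "d > 0" "t \<in> {m - d..m + d}"
  shows "norm (quad_lagr (m - d) m (m + d) fp fm fq t) \<le> norm fp + norm fm + norm fq"
proof -
  define s where "s = t - m"
  have s: "\<bar>s\<bar> \<le> d" using assms(2) by (auto simp: s_def)
  define A B C where "A = s * (s - d) / (2*d^2)" and "B = -((s + d) * (s - d) / d^2)"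
    and "C = (s + d) * s / (2*d^2)"
  have "quad_lagr (m - d) m (m + d) fp fm fq t = A *\<^sub>R fp + B *\<^sub>R fm + C *\<^sub>R fq"
    using assms(1) unfolding quad_lagr_def A_def B_def C_def s_def
    by (simp add: field_simps power2_eq_square)
  also have "norm \<dots> \<le> \<bar>A\<bar> * norm fp + \<bar>B\<bar> * norm fm + \<bar>C\<bar> * norm fq"
    using norm_triangle_ineq[of "A *\<^sub>R fp + B *\<^sub>R fm" "C *\<^sub>R fq"]
      norm_triangle_ineq[of "A *\<^sub>R fp" "B *\<^sub>R fm"] by simp
  also have "\<dots> \<le> norm fp + norm fm + norm fq"
    using lagrange_basis_abs_le_1[OF assms(1) s] unfolding A_def B_def C_def
    by (intro add_mono mult_left_le_one_le) auto
  finally show ?thesis .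
qed

lemma integral_norm_quad_lagr_le:
  fixes fp fm fq :: "'a::real_normed_vector"
  assumes "d > 0"
  shows "integral {m - d..m + d} (\<lambda>t. norm (quad_lagr (m - d) m (m + d) fp fm fq t))
    \<le> 2*d * (norm fp + norm fm + norm fq)"
proof -
  have "integral {m - d..m + d} (\<lambda>t. norm (quad_lagr (m - d) m (m + d) fp fm fq t))
      \<le> integral {m - d..m + d} (\<lambda>t. norm fp + norm fm + norm fq)"
    using norm_quad_lagr_le[OF assms]
    by (intro integral_le integrable_continuous_interval continuous_on_norm continuous_on_quad_lagr
        continuous_on_const) simp_all
  also have "\<dots> = 2*d * (norm fp + norm fm + norm fq)"
    using assms by simp
  finally show ?thesis .
qed

lemma integral_centered_quartic:
  fixes a b c e f :: real
  assumes "d \<ge> 0"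
  shows "integral {m - d..m + d} (\<lambda>t. a + b*(t - m) + c*(t - m)^2 + e*(t - m)^3 + f*(t - m)^4)
    = 2*a*d + 2/3*c*d^3 + 2/5*f*d^5"
proof -
  define F where "F t = a*(t - m) + b*(t - m)^2/2 + c*(t - m)^3/3 + e*(t - m)^4/4 + f*(t - m)^5/5"
    for t
  have "(F has_vector_derivative a + b*(t - m) + c*(t - m)^2 + e*(t - m)^3 + f*(t - m)^4)
      (at t within {m - d..m + d})" for t
    unfolding F_def has_real_derivative_iff_has_vector_derivative[symmetric]
    by (auto intro!: derivative_eq_intros simp: field_simps power2_eq_square power3_eq_cube
        numeral_eq_Suc)
  then have "((\<lambda>t. a + b*(t - m) + c*(t - m)^2 + e*(t - m)^3 + f*(t - m)^4)
      has_integral F (m + d) - F (m - d)) {m - d..m + d}"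
    using assms by (intro fundamental_theorem_of_calculus) auto
  moreover have "F (m + d) - F (m - d) = 2*a*d + 2/3*c*d^3 + 2/5*f*d^5"
    by (simp add: F_def field_simps)
  ultimately show ?thesis by (simp add: integral_unique)
qed

lemma abs_integral_weighted_le:
  fixes g w :: "real \<Rightarrow> real"
  assumes "continuous_on {a..b} g" "continuous_on {a..b} w" "\<And>t. t \<in> {a..b} \<Longrightarrow> \<bar>w t\<bar> \<le> 1"
  shows "\<bar>integral {a..b} (\<lambda>t. g t * w t)\<bar> \<le> integral {a..b} (\<lambda>t. \<bar>g t\<bar>)"
proof -
  have "norm (integral {a..b} (\<lambda>t. g t * w t)) \<le> integral {a..b} (\<lambda>t. \<bar>g t\<bar>)"
  proof (rule integral_norm_bound_integral)
    show "(\<lambda>t. g t * w t) integrable_on {a..b}"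
      using assms(1,2) by (intro integrable_continuous_interval continuous_intros)
    show "(\<lambda>t. \<bar>g t\<bar>) integrable_on {a..b}"
      using assms(1) by (intro integrable_continuous_interval continuous_intros)
    show "norm (g t * w t) \<le> \<bar>g t\<bar>" if "t \<in> {a..b}" for t
      using assms(3)[OF that] by (simp add: abs_mult mult_left_le)
  qed
  then show ?thesis by simp
qed

lemma quadratic_coeffs_le_L1:
  fixes a b c d m :: real
  assumes "d > 0"
  defines "J \<equiv> integral {m - d..m + d} (\<lambda>t. \<bar>a + b*(t - m) + c*(t - m)^2\<bar>)"
  shows "d * \<bar>a\<bar> \<le> 3*J" "d^2 * \<bar>b\<bar> \<le> 3/2*J" "d^3 * \<bar>c\<bar> \<le> 15/2*J"
proof -
  define q where "q t = a + b*(t - m) + c*(t - m)^2" for t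
  have weight_le_1: "\<bar>((t - m)/d)^k\<bar> \<le> 1" if "t \<in> {m - d..m + d}" for t k
    using that assms by (simp add: power_abs power_le_one abs_le_iff divide_le_eq_1 le_divide_eq)
  have moment_le: "\<bar>integral {m - d..m + d} (\<lambda>t. q t * ((t - m)/d)^k)\<bar> \<le> J" for k
    unfolding J_def q_def[symmetric] using assms weight_le_1
    by (intro abs_integral_weighted_le) (auto simp: q_def intro!: continuous_intros)
  have "integral {m - d..m + d} (\<lambda>t. q t * ((t - m)/d)^0)
      = integral {m - d..m + d} (\<lambda>t. a + b*(t - m) + c*(t - m)^2 + 0*(t - m)^3 + 0*(t - m)^4)"
    by (simp add: q_def)
  also have "\<dots> = 2*a*d + 2/3*c*d^3 + 2/5*0*d^5"
    using assms by (intro integral_centered_quartic) simp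
  also have "\<dots> = 2*(d*a) + 2/3*(d^3*c)"
    by simp
  finally have moment0: "integral {m - d..m + d} (\<lambda>t. q t * ((t - m)/d)^0) = \<dots>" .
  have "integral {m - d..m + d} (\<lambda>t. q t * ((t - m)/d)^1)
      = integral {m - d..m + d} (\<lambda>t. 0 + a/d*(t - m) + b/d*(t - m)^2 + c/d*(t - m)^3 + 0*(t - m)^4)"
    using assms by (intro integral_cong) (simp add: q_def field_simps power2_eq_square power3_eq_cube)
  also have "\<dots> = 2*0*d + 2/3*(b/d)*d^3 + 2/5*0*d^5"
    using assms by (intro integral_centered_quartic) simp
  also have "\<dots> = 2/3*(d^2*b)"
    using assms by (simp add: power2_eq_square power3_eq_cube)
  finally have moment1: "integral {m - d..m + d} (\<lambda>t. q t * ((t - m)/d)^1) = \<dots>" .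
  have "integral {m - d..m + d} (\<lambda>t. q t * ((t - m)/d)^2)
      = integral {m - d..m + d}
          (\<lambda>t. 0 + 0*(t - m) + a/d^2*(t - m)^2 + b/d^2*(t - m)^3 + c/d^2*(t - m)^4)"
    using assms by (intro integral_cong)
      (simp add: q_def field_simps power2_eq_square power3_eq_cube numeral_eq_Suc)
  also have "\<dots> = 2*0*d + 2/3*(a/d^2)*d^3 + 2/5*(c/d^2)*d^5"
    using assms by (intro integral_centered_quartic) simp
  also have "\<dots> = 2/3*(d*a) + 2/5*(d^3*c)"
    using assms by (simp add: algebra_simps power2_eq_square power3_eq_cube numeral_eq_Suc)
  finally have moment2: "integral {m - d..m + d} (\<lambda>t. q t * ((t - m)/d)^2) = \<dots>" .
  have "\<bar>2*(d*a) + 2/3*(d^3*c)\<bar> \<le> J" "\<bar>2/3*(d^2*b)\<bar> \<le> J"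
    "\<bar>2/3*(d*a) + 2/5*(d^3*c)\<bar> \<le> J"
    using moment_le[of 0, unfolded moment0] moment_le[of 1, unfolded moment1]
      moment_le[of 2, unfolded moment2] by -
  moreover have "d * \<bar>a\<bar> = \<bar>d*a\<bar>" "d^2 * \<bar>b\<bar> = \<bar>d^2*b\<bar>" "d^3 * \<bar>c\<bar> = \<bar>d^3*c\<bar>"
    using assms by (simp_all add: abs_mult)
  ultimately show "d * \<bar>a\<bar> \<le> 3*J" "d^2 * \<bar>b\<bar> \<le> 3/2*J" "d^3 * \<bar>c\<bar> \<le> 15/2*J"
    unfolding abs_le_iff by linarith+
qed

lemma quad_lagr_nodal_values_le_L1:
  fixes fp fm fq :: real
  assumes "d > 0"
  shows "2*d * (\<bar>fp\<bar> + \<bar>fm\<bar> + \<bar>fq\<bar>)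
    \<le> 54 * integral {m - d..m + d} (\<lambda>t. \<bar>quad_lagr (m - d) m (m + d) fp fm fq t\<bar>)"
proof -
  define b c where "b = (fq - fp) / (2*d)" and "c = (fp + fq - 2*fm) / (2*d^2)"
  define J where "J = integral {m - d..m + d} (\<lambda>t. \<bar>quad_lagr (m - d) m (m + d) fp fm fq t\<bar>)"
  have J: "J = integral {m - d..m + d} (\<lambda>t. \<bar>fm + b*(t - m) + c*(t - m)^2\<bar>)"
    unfolding J_def b_def c_def using assms by (simp add: quad_lagr_centered)
  have "fp = fm - b*d + c*d^2" "fq = fm + b*d + c*d^2"
    using assms by (simp_all add: b_def c_def field_simps power2_eq_square)
  moreover have "\<bar>b*d\<bar> = d*\<bar>b\<bar>" "\<bar>c*d^2\<bar> = d^2*\<bar>c\<bar>"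
    using assms by (simp_all add: abs_mult)
  ultimately have "\<bar>fp\<bar> + \<bar>fm\<bar> + \<bar>fq\<bar> \<le> 3*\<bar>fm\<bar> + 2*(d*\<bar>b\<bar>) + 2*(d^2*\<bar>c\<bar>)"
    by linarith
  then have "2*d * (\<bar>fp\<bar> + \<bar>fm\<bar> + \<bar>fq\<bar>)
      \<le> 2*d * (3*\<bar>fm\<bar> + 2*(d*\<bar>b\<bar>) + 2*(d^2*\<bar>c\<bar>))"
    using assms by (intro mult_left_mono) auto
  also have "\<dots> = 6*(d*\<bar>fm\<bar>) + 4*(d^2*\<bar>b\<bar>) + 4*(d^3*\<bar>c\<bar>)"
    by (simp add: algebra_simps power2_eq_square power3_eq_cube)
  also have "\<dots> \<le> 54*J"
    using quadratic_coeffs_le_L1[OF assms, where a = fm and b = b and c = c and m = m]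
    unfolding J[symmetric] by linarith
  finally show ?thesis unfolding J_def .
qed

lemma mesh_strict_mono:
  assumes "is_mesh a b M x" "k < l" "l \<le> M"
  shows "x k < x l"
proof (rule lift_Suc_mono_less_ivl[where N = "{..<M}"])
  show "x n < x (Suc n)" if "n \<in> {..<M}" for n
    using assms(1) that unfolding is_mesh_def by simp
qed (use assms(2,3) in auto)

lemma mesh_mono:
  assumes "is_mesh a b M x" "k \<le> l" "l \<le> M"
  shows "x k \<le> x l"
  using mesh_strict_mono[OF assms(1), of k l] assms(2,3) by (cases "k = l") auto

lemma mesh_element_centered:
  assumes "is_mesh a b M x" "1 \<le> i" "i \<le> M"
  obtains d where "d > 0" "x (i - 1) = midpt x i - d" "x i = midpt x i + d"
proof -
  define d where "d = (x i - x (i - 1)) / 2"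
  have "d > 0"
    using mesh_strict_mono[OF assms(1), of "i - 1" i] assms(2,3) by (simp add: d_def)
  moreover have "x (i - 1) = midpt x i - d" "x i = midpt x i + d"
    unfolding d_def midpt_def by (simp_all add: field_simps)
  ultimately show ?thesis by (rule that)
qed

lemma interp2_on_element:
  assumes mesh: "is_mesh a b M x" and i: "1 \<le> i" "i \<le> M" and t: "x (i - 1) \<le> t" "t \<le> x i"
  shows "interp2 M x f t
    = quad_lagr (x (i - 1)) (midpt x i) (x i) (f (x (i - 1))) (f (midpt x i)) (f (x i)) t"
proof -
  define P where "P j \<longleftrightarrow> 1 \<le> j \<and> j \<le> M \<and> x (j - 1) \<le> t \<and> t \<le> x j" for j
  define j where "j = (LEAST j. P j)"
  have "P i" using i t by (simp add: P_def)
  then have Pj: "P j" and "j \<le> i"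
    unfolding j_def by (auto intro: LeastI Least_le)
  have quad_j: "interp2 M x f t
      = quad_lagr (x (j - 1)) (midpt x j) (x j) (f (x (j - 1))) (f (midpt x j)) (f (x j)) t"
    using \<open>P i\<close> unfolding interp2_def P_def[symmetric] j_def[symmetric] Let_def by auto
  show ?thesis
  proof (cases "j = i")
    case False
    with \<open>j \<le> i\<close> have "j \<le> i - 1" by simp
    then have "x j \<le> x (i - 1)"
      using mesh_mono[OF mesh, of j "i - 1"] i by simp
    then have "t = x j" "t = x (i - 1)" using Pj t by (auto simp: P_def)
    moreover have "x (j - 1) \<noteq> x j" "x (i - 1) \<noteq> x i"
      using mesh_strict_mono[OF mesh, of "j - 1" j] mesh_strict_mono[OF mesh, of "i - 1" i] Pj i
      by (auto simp: P_def)
    ultimately show ?thesis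
      unfolding quad_j midpt_def by (simp add: quad_lagr_at_left quad_lagr_at_right)
  qed (simp add: quad_j)
qed

lemma integrable_norm_interp2_element:
  fixes f :: "real \<Rightarrow> 'a::real_normed_vector"
  assumes "is_mesh a b M x" "1 \<le> i" "i \<le> M"
  shows "(\<lambda>t. norm (interp2 M x f t)) integrable_on {x (i - 1)..x i}"
proof (rule integrable_eq)
  show "(\<lambda>t. norm (quad_lagr (x (i - 1)) (midpt x i) (x i) (f (x (i - 1))) (f (midpt x i)) (f (x i)) t))
      integrable_on {x (i - 1)..x i}"
    by (intro integrable_continuous_interval continuous_on_norm continuous_on_quad_lagr)
qed (simp add: interp2_on_element[OF assms])

lemma integral_mesh_sum:
  fixes g :: "real \<Rightarrow> 'b::banach"
  assumes mesh: "is_mesh a b M x"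
    and integrable: "\<And>i. 1 \<le> i \<Longrightarrow> i \<le> M \<Longrightarrow> g integrable_on {x (i - 1)..x i}"
  shows "integral {a..b} g = (\<Sum>i=1..M. integral {x (i - 1)..x i} g)"
proof -
  have "(g has_integral (\<Sum>i=1..k. integral {x (i - 1)..x i} g)) {x 0..x k}" if "k \<le> M" for k
    using that
  proof (induction k)
    case 0
    show ?case by (simp add: has_integral_refl)
  next
    case (Suc k)
    have "x 0 \<le> x k" "x k \<le> x (Suc k)"
      using mesh_mono[OF mesh] Suc.prems by simp_all
    moreover have "(g has_integral (\<Sum>i=1..k. integral {x (i - 1)..x i} g)) {x 0..x k}"
      using Suc by simp
    moreover have "(g has_integral integral {x k..x (Suc k)} g) {x k..x (Suc k)}"
      using integrable[of "Suc k"] Suc.prems by (simp add: integrable_integral)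
    ultimately have "(g has_integral (\<Sum>i=1..k. integral {x (i - 1)..x i} g)
        + integral {x k..x (Suc k)} g) {x 0..x (Suc k)}"
      by (rule has_integral_combine)
    then show ?case by simp
  qed
  from this[of M] mesh have "(g has_integral (\<Sum>i=1..M. integral {x (i - 1)..x i} g)) {a..b}"
    unfolding is_mesh_def by simp
  then show ?thesis by (rule integral_unique)
qed

lemma integral_interp2_element_le:
  fixes u :: "real \<Rightarrow> real" and v :: "real \<Rightarrow> 'a::real_normed_vector"
  assumes mesh: "is_mesh a b M x" and i: "1 \<le> i" "i \<le> M"
    and unit: "\<And>z. z \<in> nodes2 M x \<Longrightarrow> norm (v z) = 1"
  shows "integral {x (i - 1)..x i} (\<lambda>t. norm (interp2 M x (\<lambda>s. u s *\<^sub>R v s) t))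
    \<le> 54 * integral {x (i - 1)..x i} (\<lambda>t. \<bar>interp2 M x u t\<bar>)"
proof -
  define m where "m = midpt x i"
  obtain d where d: "d > 0" and ends: "x (i - 1) = m - d" "x i = m + d"
    using mesh_element_centered[OF mesh i] unfolding m_def by blast
  have "x (i - 1) \<in> nodes2 M x" "midpt x i \<in> nodes2 M x" "x i \<in> nodes2 M x"
    unfolding nodes2_def using i by auto
  then have unit_nodes: "norm (v (m - d)) = 1" "norm (v m) = 1" "norm (v (m + d)) = 1"
    using unit unfolding ends m_def[symmetric] by blast+
  have "integral {m - d..m + d} (\<lambda>t. norm (interp2 M x (\<lambda>s. u s *\<^sub>R v s) t))
      = integral {m - d..m + d} (\<lambda>t. norm (quad_lagr (m - d) m (m + d)
          (u (m - d) *\<^sub>R v (m - d)) (u m *\<^sub>R v m) (u (m + d) *\<^sub>R v (m + d)) t))"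
    using interp2_on_element[OF mesh i, where f = "\<lambda>s. u s *\<^sub>R v s"]
    unfolding ends m_def[symmetric] by (intro integral_cong) auto
  also have "\<dots> \<le> 2*d * (\<bar>u (m - d)\<bar> + \<bar>u m\<bar> + \<bar>u (m + d)\<bar>)"
    using integral_norm_quad_lagr_le[OF d, where m = m and fp = "u (m - d) *\<^sub>R v (m - d)"
        and fm = "u m *\<^sub>R v m" and fq = "u (m + d) *\<^sub>R v (m + d)"]
    by (simp add: unit_nodes)
  also have "\<dots> \<le> 54 * integral {m - d..m + d}
      (\<lambda>t. \<bar>quad_lagr (m - d) m (m + d) (u (m - d)) (u m) (u (m + d)) t\<bar>)"
    by (rule quad_lagr_nodal_values_le_L1[OF d])
  also have "\<dots> = 54 * integral {m - d..m + d} (\<lambda>t. \<bar>interp2 M x u t\<bar>)"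
    using interp2_on_element[OF mesh i, where f = u] unfolding ends m_def[symmetric]
    by (intro arg_cong[where f = "(*) 54"] integral_cong) auto
  finally show ?thesis unfolding ends .
qed

theorem lemmaA3:
  "\<exists>c>0. \<forall>(a::real) b M x (u::real \<Rightarrow> real) (v::real \<Rightarrow> real ^ 'd).
     is_mesh a b M x \<longrightarrow>
     continuous_on {a..b} u \<longrightarrow> continuous_on {a..b} v \<longrightarrow>
     (\<forall>z\<in>nodes2 M x. norm (v z) = 1) \<longrightarrow>
     integral {a..b} (\<lambda>t. norm (interp2 M x (\<lambda>s. u s *\<^sub>R v s) t))
       \<le> c * integral {a..b} (\<lambda>t. \<bar>interp2 M x u t\<bar>)"
proof (intro exI[of _ 54] conjI allI impI)
  fix a b :: real and M x and u :: "real \<Rightarrow> real" and v :: "real \<Rightarrow> real ^ 'd"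
  assume mesh: "is_mesh a b M x" and unit: "\<forall>z\<in>nodes2 M x. norm (v z) = 1"
  have "integral {a..b} (\<lambda>t. norm (interp2 M x (\<lambda>s. u s *\<^sub>R v s) t))
      = (\<Sum>i=1..M. integral {x (i - 1)..x i} (\<lambda>t. norm (interp2 M x (\<lambda>s. u s *\<^sub>R v s) t)))"
    using integrable_norm_interp2_element[OF mesh] by (rule integral_mesh_sum[OF mesh])
  also have "\<dots> \<le> (\<Sum>i=1..M. 54 * integral {x (i - 1)..x i} (\<lambda>t. \<bar>interp2 M x u t\<bar>))"
    using integral_interp2_element_le[OF mesh] unit by (intro sum_mono) auto
  also have "\<dots> = 54 * integral {a..b} (\<lambda>t. \<bar>interp2 M x u t\<bar>)"
    using integrable_norm_interp2_element[OF mesh, where f = u]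
    by (simp add: integral_mesh_sum[OF mesh] sum_distrib_left)
  finally show "integral {a..b} (\<lambda>t. norm (interp2 M x (\<lambda>s. u s *\<^sub>R v s) t))
      \<le> 54 * integral {a..b} (\<lambda>t. \<bar>interp2 M x u t\<bar>)" .
qed simp

end
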